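(* Let $M$ be the spacetime with metric $$ds^2=-b^2(r)\,dt^2+f_1^2(r)\,dr^2+f_2^2(r)\,(d\theta^2+\sin^2\theta\,d\phi^2),$$ where $b,f_1,f_2$ are smooth positive functions of $r$ on an open interval. Let $u_k$ be the unit timelike covector with components $u_0=-b$, $u_r=u_\theta=u_\phi=0$, and let $\chi_k$ be the unit spacelike radial covector with components $\chi_r=f_1$, $\chi_0=\chi_\theta=\chi_\phi=0$. For smooth functions $\mathsf A(r),\mathsf B(r),\mathsf C(r)$ consider the symmetric tensor $$K_{kl}=\mathsf A(r)\,u_ku_l+\mathsf B(r)\,g_{kl}+\mathsf C(r)\,\chi_k\chi_l .$$ Then $K_{kl}$ is a divergence-free conformal Killing tensor if and only if there exist constants $\kappa_1,\kappa_2,\kappa_3$ such that $$\mathsf A=\kappa_2 f_2^2-2\kappa_3 b^2,\qquad \mathsf B=\kappa_1+2\kappa_2 f_2^2+\kappa_3 b^2,\qquad \mathsf C=-\kappa_2 f_2^2 .$$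
   Context: $\nabla$ is the Levi-Civita connection of $g$. A symmetric tensor $K_{kl}$ with trace $K=K^k{}_k$ is called a conformal Killing tensor (in the convention used here) if $\nabla_jK_{kl}+\nabla_kK_{jl}+\nabla_lK_{jk}=\tfrac16\left(g_{kl}\nabla_jK+g_{jl}\nabla_kK+g_{jk}\nabla_lK\right)$, and divergence-free if $\nabla^kK_{kl}=0$. *)

theory Defs
  imports "HOL-Analysis.Analysis"
begin

text \<open>Coordinates: a point is x :: nat => real with x 0 = t, x 1 = r, x 2 = theta, x 3 = phi
  (entries at indices >= 4 are ignored). Tensor indices range over {0..3}.\<close>

type_synonym point = "nat \<Rightarrow> real"

definition smooth_on :: "(real \<Rightarrow> real) \<Rightarrow> real set \<Rightarrow> bool" where
  "smooth_on f S \<longleftrightarrow> (\<forall>n. (deriv ^^ n) f differentiable_on S)"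

definition pd :: "nat \<Rightarrow> (point \<Rightarrow> real) \<Rightarrow> point \<Rightarrow> real" where
  "pd i F x = deriv (\<lambda>s. F (x(i := s))) (x i)"

definition christoffel ::
  "(point \<Rightarrow> nat \<Rightarrow> nat \<Rightarrow> real) \<Rightarrow> (point \<Rightarrow> nat \<Rightarrow> nat \<Rightarrow> real) \<Rightarrow> point \<Rightarrow> nat \<Rightarrow> nat \<Rightarrow> nat \<Rightarrow> real" where
  "christoffel g gi x m i j =
     (\<Sum>l<4. gi x m l * (pd i (\<lambda>y. g y l j) x + pd j (\<lambda>y. g y l i) x - pd l (\<lambda>y. g y i j) x)) / 2"

definition cov2 ::
  "(point \<Rightarrow> nat \<Rightarrow> nat \<Rightarrow> real) \<Rightarrow> (point \<Rightarrow> nat \<Rightarrow> nat \<Rightarrow> real) \<Rightarrow> (point \<Rightarrow> nat \<Rightarrow> nat \<Rightarrow> real)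
     \<Rightarrow> point \<Rightarrow> nat \<Rightarrow> nat \<Rightarrow> nat \<Rightarrow> real" where
  "cov2 g gi K x j k l =
     pd j (\<lambda>y. K y k l) x
     - (\<Sum>m<4. christoffel g gi x m j k * K x m l)
     - (\<Sum>m<4. christoffel g gi x m j l * K x k m)"

definition trace2 :: "(point \<Rightarrow> nat \<Rightarrow> nat \<Rightarrow> real) \<Rightarrow> (point \<Rightarrow> nat \<Rightarrow> nat \<Rightarrow> real) \<Rightarrow> point \<Rightarrow> real" where
  "trace2 gi K x = (\<Sum>k<4. \<Sum>l<4. gi x k l * K x k l)"

definition conformal_killing_at ::
  "(point \<Rightarrow> nat \<Rightarrow> nat \<Rightarrow> real) \<Rightarrow> (point \<Rightarrow> nat \<Rightarrow> nat \<Rightarrow> real) \<Rightarrow> (point \<Rightarrow> nat \<Rightarrow> nat \<Rightarrow> real) \<Rightarrow> point \<Rightarrow> bool" where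
  "conformal_killing_at g gi K x \<longleftrightarrow>
     (\<forall>j<4. \<forall>k<4. \<forall>l<4.
        cov2 g gi K x j k l + cov2 g gi K x k j l + cov2 g gi K x l j k
        = (1/6) * (g x k l * pd j (trace2 gi K) x + g x j l * pd k (trace2 gi K) x
                   + g x j k * pd l (trace2 gi K) x))"

definition divergence_free_at ::
  "(point \<Rightarrow> nat \<Rightarrow> nat \<Rightarrow> real) \<Rightarrow> (point \<Rightarrow> nat \<Rightarrow> nat \<Rightarrow> real) \<Rightarrow> (point \<Rightarrow> nat \<Rightarrow> nat \<Rightarrow> real) \<Rightarrow> point \<Rightarrow> bool" where
  "divergence_free_at g gi K x \<longleftrightarrow>
     (\<forall>l<4. (\<Sum>k<4. \<Sum>j<4. gi x k j * cov2 g gi K x j k l) = 0)"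

definition sss_metric :: "(real \<Rightarrow> real) \<Rightarrow> (real \<Rightarrow> real) \<Rightarrow> (real \<Rightarrow> real) \<Rightarrow> point \<Rightarrow> nat \<Rightarrow> nat \<Rightarrow> real" where
  "sss_metric b f1 f2 x i j =
     (if i \<noteq> j then 0
      else if i = 0 then - (b (x 1))\<^sup>2
      else if i = 1 then (f1 (x 1))\<^sup>2
      else if i = 2 then (f2 (x 1))\<^sup>2
      else if i = 3 then (f2 (x 1))\<^sup>2 * (sin (x 2))\<^sup>2
      else 0)"

definition sss_metric_inv :: "(real \<Rightarrow> real) \<Rightarrow> (real \<Rightarrow> real) \<Rightarrow> (real \<Rightarrow> real) \<Rightarrow> point \<Rightarrow> nat \<Rightarrow> nat \<Rightarrow> real" where
  "sss_metric_inv b f1 f2 x i j = (if i = j then inverse (sss_metric b f1 f2 x i i) else 0)"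

definition u_cov :: "(real \<Rightarrow> real) \<Rightarrow> point \<Rightarrow> nat \<Rightarrow> real" where
  "u_cov b x k = (if k = 0 then - b (x 1) else 0)"

definition chi_cov :: "(real \<Rightarrow> real) \<Rightarrow> point \<Rightarrow> nat \<Rightarrow> real" where
  "chi_cov f1 x k = (if k = 1 then f1 (x 1) else 0)"

definition K_tensor ::
  "(real \<Rightarrow> real) \<Rightarrow> (real \<Rightarrow> real) \<Rightarrow> (real \<Rightarrow> real) \<Rightarrow> (real \<Rightarrow> real) \<Rightarrow> (real \<Rightarrow> real) \<Rightarrow> (real \<Rightarrow> real)
     \<Rightarrow> point \<Rightarrow> nat \<Rightarrow> nat \<Rightarrow> real" where
  "K_tensor A B C b f1 f2 x k l =
     A (x 1) * u_cov b x k * u_cov b x l + B (x 1) * sss_metric b f1 f2 x k l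
     + C (x 1) * chi_cov f1 x k * chi_cov f1 x l"

end

theory Submission
  imports Defs
begin

(* Since the metric is diagonal and A, B, C, b, f1, f2 depend on r alone, the conformal Killing
   and divergence conditions collapse to a linear first-order system.  The (r,r,r) Killing
   component gives (tr K)' = 6 (B + C)'; with this, the (r,theta,theta) and (t,t,r) components
   and the r-component of the divergence say exactly that C/f2^2 and (A + C)/b^2 are constant
   and that B' = -(A + C) b'/b - 2 C'.  Conversely this system makes every component vanish,
   and on an interval it integrates to the three constants. *)

lemma zero_derivative_iff_constant_on:
  fixes h h' :: "real \<Rightarrow> real"
  assumes "open I" "is_interval I" and h: "\<And>r. r \<in> I \<Longrightarrow> (h has_real_derivative h' r) (at r)"
  shows "(\<forall>r\<in>I. h' r = 0) \<longleftrightarrow> (\<exists>c. \<forall>r\<in>I. h r = c)"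
proof
  assume "\<forall>r\<in>I. h' r = 0"
  then show "\<exists>c. \<forall>r\<in>I. h r = c"
    using assms by (intro has_field_derivative_zero_constant)
      (auto simp: is_interval_convex has_field_derivative_at_within)
next
  assume "\<exists>c. \<forall>r\<in>I. h r = c"
  then obtain c where c: "\<And>r. r \<in> I \<Longrightarrow> h r = c" by blast
  show "\<forall>r\<in>I. h' r = 0"
  proof
    fix r assume r: "r \<in> I"
    have "((\<lambda>_. c) has_real_derivative h' r) (at r)"
      by (rule has_field_derivative_transform_within_open[OF h[OF r] \<open>open I\<close> r]) (simp add: c)
    then show "h' r = 0" by (rule DERIV_unique) simp
  qed
qed

lemma quotient_by_square_constant_iff:
  fixes h h' g g' :: "real \<Rightarrow> real"
  assumes "open I" "is_interval I" and g0: "\<And>r. r \<in> I \<Longrightarrow> g r \<noteq> 0"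
    and h: "\<And>r. r \<in> I \<Longrightarrow> (h has_real_derivative h' r) (at r)"
    and g: "\<And>r. r \<in> I \<Longrightarrow> (g has_real_derivative g' r) (at r)"
  shows "(\<forall>r\<in>I. h' r * g r = 2 * h r * g' r) \<longleftrightarrow> (\<exists>c. \<forall>r\<in>I. h r = c * (g r)\<^sup>2)"
proof -
  have "((\<lambda>r. h r / (g r)\<^sup>2) has_real_derivative (h' r * g r - 2 * h r * g' r) / (g r) ^ 3) (at r)"
    if r: "r \<in> I" for r
    using g0[OF r]
    by (auto intro!: derivative_eq_intros h g r simp: field_simps power2_eq_square power3_eq_cube)
  then have "(\<forall>r\<in>I. (h' r * g r - 2 * h r * g' r) / (g r) ^ 3 = 0) \<longleftrightarrow> (\<exists>c. \<forall>r\<in>I. h r / (g r)\<^sup>2 = c)"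
    by (rule zero_derivative_iff_constant_on[OF assms(1,2)])
  moreover have "(\<exists>c. \<forall>r\<in>I. h r / (g r)\<^sup>2 = c) \<longleftrightarrow> (\<exists>c. \<forall>r\<in>I. h r = c * (g r)\<^sup>2)"
    using g0 by (auto simp: field_simps)
  ultimately show ?thesis
    using g0 by simp
qed

lemma sum_lessThan_4: "(\<Sum>k<(4::nat). f k) = f 0 + f 1 + f 2 + f 3"
  by (simp add: eval_nat_numeral)

lemma all_lessThan_4: "(\<forall>k<(4::nat). P k) \<longleftrightarrow> P 0 \<and> P 1 \<and> P 2 \<and> P 3"
  by (auto simp: eval_nat_numeral less_Suc_eq)

lemma pd_eq_0_if_constant_along:
  assumes "\<And>s. F (x(i := s)) = F x"
  shows "pd i F x = 0"
  using assms by (simp add: pd_def)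

definition radial_killing_ode ::
  "(real \<Rightarrow> real) \<Rightarrow> (real \<Rightarrow> real) \<Rightarrow> (real \<Rightarrow> real)
     \<Rightarrow> (real \<Rightarrow> real) \<Rightarrow> (real \<Rightarrow> real) \<Rightarrow> real \<Rightarrow> bool"
where
  "radial_killing_ode A B C b f2 r \<longleftrightarrow>
     deriv C r * f2 r = 2 * C r * deriv f2 r \<and>
     (deriv A r + deriv C r) * b r = 2 * (A r + C r) * deriv b r \<and>
     deriv B r * b r = - (A r + C r) * deriv b r - 2 * deriv C r * b r"

locale static_spherical =
  fixes b f1 f2 A B C :: "real \<Rightarrow> real" and I :: "real set"
  assumes open_I: "open I"
    and b_pos: "\<And>r. r \<in> I \<Longrightarrow> b r > 0"
    and f1_pos: "\<And>r. r \<in> I \<Longrightarrow> f1 r > 0"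
    and f2_pos: "\<And>r. r \<in> I \<Longrightarrow> f2 r > 0"
    and db: "\<And>r. r \<in> I \<Longrightarrow> (b has_real_derivative deriv b r) (at r)"
    and df1: "\<And>r. r \<in> I \<Longrightarrow> (f1 has_real_derivative deriv f1 r) (at r)"
    and df2: "\<And>r. r \<in> I \<Longrightarrow> (f2 has_real_derivative deriv f2 r) (at r)"
    and dA: "\<And>r. r \<in> I \<Longrightarrow> (A has_real_derivative deriv A r) (at r)"
    and dB: "\<And>r. r \<in> I \<Longrightarrow> (B has_real_derivative deriv B r) (at r)"
    and dC: "\<And>r. r \<in> I \<Longrightarrow> (C has_real_derivative deriv C r) (at r)"
begin

abbreviation "g \<equiv> sss_metric b f1 f2"
abbreviation "g_inv \<equiv> sss_metric_inv b f1 f2"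
abbreviation "K \<equiv> K_tensor A B C b f1 f2"
abbreviation "trace_K \<equiv> trace2 g_inv K"

lemma pd_metric:
  assumes x: "x 1 \<in> I"
  shows "pd i (\<lambda>y. g y k l) x =
    (if k \<noteq> l then 0
     else if i = 1 then
       (if k = 0 then - (2 * b (x 1) * deriv b (x 1))
        else if k = 1 then 2 * f1 (x 1) * deriv f1 (x 1)
        else if k = 2 then 2 * f2 (x 1) * deriv f2 (x 1)
        else if k = 3 then 2 * f2 (x 1) * deriv f2 (x 1) * (sin (x 2))\<^sup>2
        else 0)
     else if i = 2 then (if k = 3 then (f2 (x 1))\<^sup>2 * (2 * sin (x 2) * cos (x 2)) else 0)
     else 0)"
proof -
  consider "i = 1" | "i = 2" | "i \<noteq> 1" "i \<noteq> 2" by blast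
  then show ?thesis
  proof cases
    case 1
    then show ?thesis
      by (simp add: pd_def sss_metric_def cong: if_cong)
        (intro conjI impI DERIV_imp_deriv; auto intro!: derivative_eq_intros db df1 df2 x[simplified])
  next
    case 2
    then show ?thesis
      by (simp add: pd_def sss_metric_def cong: if_cong)
        (intro conjI impI DERIV_imp_deriv; auto intro!: derivative_eq_intros)
  qed (auto intro!: pd_eq_0_if_constant_along simp: sss_metric_def)
qed

lemma pd_K:
  assumes x: "x 1 \<in> I"
  shows "pd i (\<lambda>y. K y k l) x =
    (if k \<noteq> l then 0
     else if i = 1 then
       (if k = 0 then (deriv A (x 1) - deriv B (x 1)) * (b (x 1))\<^sup>2 + 2 * (A (x 1) - B (x 1)) * b (x 1) * deriv b (x 1)
        else if k = 1 then (deriv B (x 1) + deriv C (x 1)) * (f1 (x 1))\<^sup>2 + 2 * (B (x 1) + C (x 1)) * f1 (x 1) * deriv f1 (x 1)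
        else if k = 2 then deriv B (x 1) * (f2 (x 1))\<^sup>2 + 2 * B (x 1) * f2 (x 1) * deriv f2 (x 1)
        else if k = 3 then (deriv B (x 1) * (f2 (x 1))\<^sup>2 + 2 * B (x 1) * f2 (x 1) * deriv f2 (x 1)) * (sin (x 2))\<^sup>2
        else 0)
     else if i = 2 then (if k = 3 then B (x 1) * (f2 (x 1))\<^sup>2 * (2 * sin (x 2) * cos (x 2)) else 0)
     else 0)"
proof -
  note defs = K_tensor_def sss_metric_def u_cov_def chi_cov_def
  consider "i = 1" | "i = 2" | "i \<noteq> 1" "i \<noteq> 2" by blast
  then show ?thesis
  proof cases
    case 1
    then show ?thesis
      by (simp add: pd_def defs cong: if_cong)
        (intro conjI impI DERIV_imp_deriv; auto intro!: derivative_eq_intros db df1 df2 dA dB dC x[simplified]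
          simp: algebra_simps power2_eq_square)
  next
    case 2
    then show ?thesis
      by (simp add: pd_def defs cong: if_cong)
        (intro conjI impI DERIV_imp_deriv; auto intro!: derivative_eq_intros simp: algebra_simps power2_eq_square)
  qed (auto intro!: pd_eq_0_if_constant_along simp: defs)
qed

lemma trace_K_eq:
  assumes "y 1 \<in> I" "sin (y 2) \<noteq> 0"
  shows "trace_K y = - A (y 1) + 4 * B (y 1) + C (y 1)"
  using assms b_pos[of "y 1"] f1_pos[of "y 1"] f2_pos[of "y 1"]
  by (simp add: trace2_def sum_lessThan_4 K_tensor_def sss_metric_inv_def sss_metric_def u_cov_def chi_cov_def
      field_simps power2_eq_square)

lemma pd_trace_K:
  assumes x: "x 1 \<in> I" and \<theta>: "0 < x 2" "x 2 < pi"
  shows "pd i trace_K x = (if i = 1 then - deriv A (x 1) + 4 * deriv B (x 1) + deriv C (x 1) else 0)"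
proof -
  consider "i = 1" | "i = 2" | "i \<noteq> 1" "i \<noteq> 2" by blast
  then show ?thesis
  proof cases
    case 1
    have "\<forall>\<^sub>F s in nhds (x 1). s \<in> I"
      using open_I x by (rule eventually_nhds_in_open)
    then have "pd 1 trace_K x = deriv (\<lambda>s. - A s + 4 * B s + C s) (x 1)"
      unfolding pd_def using \<theta> sin_gt_zero[of "x 2"]
      by (intro deriv_cong_ev) (auto elim!: eventually_mono simp: trace_K_eq)
    also have "\<dots> = - deriv A (x 1) + 4 * deriv B (x 1) + deriv C (x 1)"
      using x by (intro DERIV_imp_deriv) (auto intro!: derivative_eq_intros dA dB dC)
    finally show ?thesis using 1 by simp
  next
    case 2
    have "\<forall>\<^sub>F s in nhds (x 2). s \<in> {0<..<pi}"
      using \<theta> by (intro eventually_nhds_in_open) auto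
    moreover have "trace_K (x(2 := s)) = - A (x 1) + 4 * B (x 1) + C (x 1)" if "s \<in> {0<..<pi}" for s
      using trace_K_eq[of "x(2 := s)"] x that sin_gt_zero[of s] by simp
    ultimately have "pd 2 trace_K x = deriv (\<lambda>s. - A (x 1) + 4 * B (x 1) + C (x 1)) (x 2)"
      unfolding pd_def by (intro deriv_cong_ev) (auto elim!: eventually_mono)
    then show ?thesis using 2 by simp
  qed (auto intro!: pd_eq_0_if_constant_along simp: trace2_def K_tensor_def sss_metric_inv_def
      sss_metric_def u_cov_def chi_cov_def cong: if_cong)
qed

lemma cyclic_cov2_components:
  assumes x: "x 1 \<in> I" and \<theta>: "0 < x 2" "x 2 < pi"
  shows "cov2 g g_inv K x 1 1 1 + cov2 g g_inv K x 1 1 1 + cov2 g g_inv K x 1 1 1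
           = 3 * (deriv B (x 1) + deriv C (x 1)) * (f1 (x 1))\<^sup>2"
    and "cov2 g g_inv K x 1 2 2 + cov2 g g_inv K x 2 1 2 + cov2 g g_inv K x 2 1 2
           = deriv B (x 1) * (f2 (x 1))\<^sup>2 + 2 * C (x 1) * f2 (x 1) * deriv f2 (x 1)"
    and "cov2 g g_inv K x 0 0 1 + cov2 g g_inv K x 0 0 1 + cov2 g g_inv K x 1 0 0
           = (deriv A (x 1) - deriv B (x 1)) * (b (x 1))\<^sup>2 - 2 * (A (x 1) + C (x 1)) * b (x 1) * deriv b (x 1)"
  using x \<theta> sin_gt_zero[of "x 2"] b_pos[OF x] f1_pos[OF x] f2_pos[OF x]
  unfolding cov2_def christoffel_def sum_lessThan_4
  by (simp_all add: pd_metric pd_K pd_trace_K)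
    (simp_all add: sss_metric_inv_def sss_metric_def K_tensor_def u_cov_def chi_cov_def
      field_simps power2_eq_square)

lemma divergence_component_r:
  assumes x: "x 1 \<in> I" and \<theta>: "0 < x 2" "x 2 < pi"
  shows "(\<Sum>k<4. \<Sum>j<4. g_inv x k j * cov2 g g_inv K x j k 1)
           = deriv B (x 1) + deriv C (x 1) + (A (x 1) + C (x 1)) * deriv b (x 1) / b (x 1)
             + 2 * C (x 1) * deriv f2 (x 1) / f2 (x 1)"
  using x \<theta> sin_gt_zero[of "x 2"] b_pos[OF x] f1_pos[OF x] f2_pos[OF x]
  unfolding cov2_def christoffel_def sum_lessThan_4
  by (simp add: pd_metric pd_K pd_trace_K)
    (simp add: sss_metric_inv_def sss_metric_def K_tensor_def u_cov_def chi_cov_def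
      field_simps power2_eq_square)

lemma radial_killing_ode_if_killing:
  assumes x: "x 1 \<in> I" and \<theta>: "0 < x 2" "x 2 < pi"
    and killing: "conformal_killing_at g g_inv K x" and div_free: "divergence_free_at g g_inv K x"
  shows "radial_killing_ode A B C b f2 (x 1)"
proof -
  let ?T = "- deriv A (x 1) + 4 * deriv B (x 1) + deriv C (x 1)"
  have b: "b (x 1) > 0" and f1: "f1 (x 1) > 0" and f2: "f2 (x 1) > 0"
    using b_pos f1_pos f2_pos x by auto
  note killing_at = killing[unfolded conformal_killing_at_def, rule_format]
  note components = cyclic_cov2_components[OF x \<theta>]
  have "3 * (deriv B (x 1) + deriv C (x 1)) * (f1 (x 1))\<^sup>2 = (f1 (x 1))\<^sup>2 * ?T / 2"
    using killing_at[of 1 1 1] unfolding components(1) pd_trace_K[OF x \<theta>] by (simp add: sss_metric_def)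
  then have "(f1 (x 1))\<^sup>2 * (?T - 6 * (deriv B (x 1) + deriv C (x 1))) = 0"
    by (simp add: algebra_simps)
  then have T: "?T = 6 * (deriv B (x 1) + deriv C (x 1))"
    using f1 by simp
  have "deriv B (x 1) * (f2 (x 1))\<^sup>2 + 2 * C (x 1) * f2 (x 1) * deriv f2 (x 1) = (f2 (x 1))\<^sup>2 * ?T / 6"
    using killing_at[of 1 2 2] unfolding components(2) pd_trace_K[OF x \<theta>] by (simp add: sss_metric_def)
  then have "f2 (x 1) * (deriv C (x 1) * f2 (x 1) - 2 * C (x 1) * deriv f2 (x 1)) = 0"
    unfolding T by (auto simp: field_simps power2_eq_square)
  then have ode1: "deriv C (x 1) * f2 (x 1) = 2 * C (x 1) * deriv f2 (x 1)"
    using f2 by auto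
  have "(deriv A (x 1) - deriv B (x 1)) * (b (x 1))\<^sup>2 - 2 * (A (x 1) + C (x 1)) * b (x 1) * deriv b (x 1)
      = - ((b (x 1))\<^sup>2 * ?T / 6)"
    using killing_at[of 0 0 1] unfolding components(3) pd_trace_K[OF x \<theta>] by (simp add: sss_metric_def)
  then have "b (x 1) * ((deriv A (x 1) + deriv C (x 1)) * b (x 1) - 2 * (A (x 1) + C (x 1)) * deriv b (x 1)) = 0"
    unfolding T by (auto simp: field_simps power2_eq_square)
  then have ode2: "(deriv A (x 1) + deriv C (x 1)) * b (x 1) = 2 * (A (x 1) + C (x 1)) * deriv b (x 1)"
    using b by auto
  have "deriv B (x 1) + deriv C (x 1) + (A (x 1) + C (x 1)) * deriv b (x 1) / b (x 1)
      + 2 * C (x 1) * deriv f2 (x 1) / f2 (x 1) = 0"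
    using div_free[unfolded divergence_free_at_def, rule_format, of 1]
    unfolding divergence_component_r[OF x \<theta>] by simp
  moreover have "2 * C (x 1) * deriv f2 (x 1) / f2 (x 1) = deriv C (x 1)"
    using ode1 f2 by (simp add: field_simps)
  ultimately have "deriv B (x 1) + 2 * deriv C (x 1) + (A (x 1) + C (x 1)) * deriv b (x 1) / b (x 1) = 0"
    by simp
  then have ode3: "deriv B (x 1) * b (x 1) = - (A (x 1) + C (x 1)) * deriv b (x 1) - 2 * deriv C (x 1) * b (x 1)"
    using b by (auto simp: field_simps)
  show ?thesis
    unfolding radial_killing_ode_def using ode1 ode2 ode3 by blast
qed

lemma killing_if_radial_killing_ode:
  assumes x: "x 1 \<in> I" and \<theta>: "0 < x 2" "x 2 < pi"
    and ode: "radial_killing_ode A B C b f2 (x 1)"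
  shows "conformal_killing_at g g_inv K x \<and> divergence_free_at g g_inv K x"
proof -
  have b: "b (x 1) > 0" and f2: "f2 (x 1) > 0"
    using b_pos f2_pos x by auto
  have ode1: "deriv C (x 1) * f2 (x 1) = 2 * C (x 1) * deriv f2 (x 1)"
    and ode2: "(deriv A (x 1) + deriv C (x 1)) * b (x 1) = 2 * (A (x 1) + C (x 1)) * deriv b (x 1)"
    and ode3: "deriv B (x 1) * b (x 1) = - (A (x 1) + C (x 1)) * deriv b (x 1) - 2 * deriv C (x 1) * b (x 1)"
    using ode unfolding radial_killing_ode_def by auto
  have deriv_C: "deriv C (x 1) = 2 * C (x 1) * deriv f2 (x 1) / f2 (x 1)"
    using ode1 f2 by (simp add: field_simps)
  have "deriv A (x 1) = 2 * (A (x 1) + C (x 1)) * deriv b (x 1) / b (x 1) - deriv C (x 1)"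
    using ode2 b by (simp add: field_simps)
  then have deriv_A: "deriv A (x 1) =
      2 * (A (x 1) + C (x 1)) * deriv b (x 1) / b (x 1) - 2 * C (x 1) * deriv f2 (x 1) / f2 (x 1)"
    unfolding deriv_C .
  have "deriv B (x 1) = - (A (x 1) + C (x 1)) * deriv b (x 1) / b (x 1) - 2 * deriv C (x 1)"
    using ode3 b by (simp add: field_simps)
  then have deriv_B: "deriv B (x 1) =
      - (A (x 1) + C (x 1)) * deriv b (x 1) / b (x 1) - 4 * C (x 1) * deriv f2 (x 1) / f2 (x 1)"
    unfolding deriv_C by simp
  \<comment> \<open>simp rewrites \<open>x 1\<close> to \<open>x (Suc 0)\<close> before these rules can fire, hence the simplified copies\<close>
  show ?thesis
    using x \<theta> sin_gt_zero[of "x 2"] b f1_pos[OF x] f2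
    unfolding conformal_killing_at_def divergence_free_at_def cov2_def christoffel_def
      all_lessThan_4 sum_lessThan_4
    by (simp add: pd_metric pd_K pd_trace_K)
      (simp add: sss_metric_inv_def sss_metric_def K_tensor_def u_cov_def chi_cov_def
        deriv_A deriv_B deriv_C deriv_A[simplified] deriv_B[simplified] deriv_C[simplified]
        field_simps power2_eq_square)
qed

lemma killing_on_domain_iff_radial_killing_ode:
  "(\<forall>x::point. x 1 \<in> I \<and> 0 < x 2 \<and> x 2 < pi \<longrightarrow>
      conformal_killing_at g g_inv K x \<and> divergence_free_at g g_inv K x)
   \<longleftrightarrow> (\<forall>r\<in>I. radial_killing_ode A B C b f2 r)"
proof
  assume killing: "\<forall>x::point. x 1 \<in> I \<and> 0 < x 2 \<and> x 2 < pi \<longrightarrow>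
      conformal_killing_at g g_inv K x \<and> divergence_free_at g g_inv K x"
  show "\<forall>r\<in>I. radial_killing_ode A B C b f2 r"
  proof
    fix r assume "r \<in> I"
    then show "radial_killing_ode A B C b f2 r"
      using radial_killing_ode_if_killing[of "(\<lambda>_. r)(2 := pi / 2)"] killing by auto
  qed
qed (use killing_if_radial_killing_ode in blast)

context
  assumes interval_I: "is_interval I"
begin

lemma C_div_f2_square_constant_iff:
  "(\<forall>r\<in>I. deriv C r * f2 r = 2 * C r * deriv f2 r) \<longleftrightarrow> (\<exists>c. \<forall>r\<in>I. C r = c * (f2 r)\<^sup>2)"
  by (intro quotient_by_square_constant_iff[OF open_I interval_I])
    (auto intro: dC df2 dest: f2_pos)

lemma A_plus_C_div_b_square_constant_iff:
  "(\<forall>r\<in>I. (deriv A r + deriv C r) * b r = 2 * (A r + C r) * deriv b r) \<longleftrightarrow>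
   (\<exists>c. \<forall>r\<in>I. A r + C r = c * (b r)\<^sup>2)"
  by (intro quotient_by_square_constant_iff[OF open_I interval_I])
    (auto intro!: derivative_eq_intros dA dC db dest: b_pos)

lemma B_eq_constant_plus_squares_iff:
  "(\<forall>r\<in>I. deriv B r = 2 * \<kappa>3 * b r * deriv b r + 4 * \<kappa>2 * f2 r * deriv f2 r) \<longleftrightarrow>
   (\<exists>\<kappa>1. \<forall>r\<in>I. B r = \<kappa>1 + 2 * \<kappa>2 * (f2 r)\<^sup>2 + \<kappa>3 * (b r)\<^sup>2)"
proof -
  have "(\<forall>r\<in>I. deriv B r - 2 * \<kappa>3 * b r * deriv b r - 4 * \<kappa>2 * f2 r * deriv f2 r = 0) \<longleftrightarrow>
      (\<exists>c. \<forall>r\<in>I. B r - \<kappa>3 * (b r)\<^sup>2 - 2 * \<kappa>2 * (f2 r)\<^sup>2 = c)"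
    by (intro zero_derivative_iff_constant_on[OF open_I interval_I])
      (auto intro!: derivative_eq_intros dB db df2 simp: power2_eq_square)
  then show ?thesis
    by (simp add: algebra_simps)
qed

lemma deriv_C_if_C_eq:
  assumes "\<forall>r\<in>I. C r = c * (f2 r)\<^sup>2" "r \<in> I"
  shows "deriv C r = 2 * c * f2 r * deriv f2 r"
proof -
  have "deriv C r * f2 r = 2 * c * f2 r * deriv f2 r * f2 r"
    using C_div_f2_square_constant_iff assms by (auto simp: power2_eq_square)
  then show ?thesis
    using f2_pos[OF \<open>r \<in> I\<close>] by simp
qed

lemma radial_killing_ode_iff_constants:
  "(\<forall>r\<in>I. radial_killing_ode A B C b f2 r) \<longleftrightarrow>
    (\<exists>\<kappa>1 \<kappa>2 \<kappa>3. \<forall>r\<in>I.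
       A r = \<kappa>2 * (f2 r)\<^sup>2 - 2 * \<kappa>3 * (b r)\<^sup>2
     \<and> B r = \<kappa>1 + 2 * \<kappa>2 * (f2 r)\<^sup>2 + \<kappa>3 * (b r)\<^sup>2
     \<and> C r = - \<kappa>2 * (f2 r)\<^sup>2)"
    (is "?ode \<longleftrightarrow> (\<exists>\<kappa>1 \<kappa>2 \<kappa>3. ?constants \<kappa>1 \<kappa>2 \<kappa>3)")
proof
  assume ode: ?ode
  then obtain c2 where c2: "\<forall>r\<in>I. C r = c2 * (f2 r)\<^sup>2"
    using C_div_f2_square_constant_iff by (auto simp: radial_killing_ode_def)
  obtain c3 where c3: "\<forall>r\<in>I. A r + C r = c3 * (b r)\<^sup>2"
    using ode A_plus_C_div_b_square_constant_iff by (auto simp: radial_killing_ode_def)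
  have "deriv B r = 2 * (- c3 / 2) * b r * deriv b r + 4 * (- c2) * f2 r * deriv f2 r" if r: "r \<in> I" for r
  proof -
    have "b r * (deriv B r + c3 * b r * deriv b r + 2 * deriv C r) = 0"
      using ode c3 r by (auto simp: radial_killing_ode_def algebra_simps power2_eq_square)
    then show ?thesis
      using b_pos[OF r] deriv_C_if_C_eq[OF c2 r] by simp
  qed
  then obtain c1 where "\<forall>r\<in>I. B r = c1 + 2 * (- c2) * (f2 r)\<^sup>2 + (- c3 / 2) * (b r)\<^sup>2"
    using B_eq_constant_plus_squares_iff by blast
  then have "?constants c1 (- c2) (- c3 / 2)"
    using c2 c3 by (auto simp: algebra_simps)
  then show "\<exists>\<kappa>1 \<kappa>2 \<kappa>3. ?constants \<kappa>1 \<kappa>2 \<kappa>3" by blast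
next
  assume "\<exists>\<kappa>1 \<kappa>2 \<kappa>3. ?constants \<kappa>1 \<kappa>2 \<kappa>3"
  then obtain \<kappa>1 \<kappa>2 \<kappa>3 where \<kappa>: "?constants \<kappa>1 \<kappa>2 \<kappa>3" by blast
  then have C: "\<forall>r\<in>I. C r = (- \<kappa>2) * (f2 r)\<^sup>2" and AC: "\<forall>r\<in>I. A r + C r = (- 2 * \<kappa>3) * (b r)\<^sup>2"
    by auto
  have "\<forall>r\<in>I. deriv B r = 2 * \<kappa>3 * b r * deriv b r + 4 * \<kappa>2 * f2 r * deriv f2 r"
    using B_eq_constant_plus_squares_iff \<kappa> by blast
  moreover have "\<forall>r\<in>I. deriv C r * f2 r = 2 * C r * deriv f2 r"
    using C_div_f2_square_constant_iff C by blast
  moreover have "\<forall>r\<in>I. (deriv A r + deriv C r) * b r = 2 * (A r + C r) * deriv b r"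
    using A_plus_C_div_b_square_constant_iff AC by blast
  ultimately show ?ode
    using AC deriv_C_if_C_eq[OF C]
    by (auto simp: radial_killing_ode_def algebra_simps power2_eq_square)
qed

end

end

lemma has_real_derivative_if_smooth_on:
  assumes "smooth_on f I" "open I" "r \<in> I"
  shows "(f has_real_derivative deriv f r) (at r)"
proof -
  have "f differentiable_on I"
    using assms(1) unfolding smooth_on_def by (metis funpow_0)
  then show ?thesis
    using assms(2,3) by (simp add: differentiable_on_eq_differentiable_at DERIV_deriv_iff_real_differentiable)
qed

theorem theorem1:
  fixes b f1 f2 A B C :: "real \<Rightarrow> real" and I :: "real set"
  assumes "open I" and "is_interval I" and "I \<noteq> {}"
    and "smooth_on b I" and "smooth_on f1 I" and "smooth_on f2 I"
    and "\<forall>r\<in>I. b r > 0" and "\<forall>r\<in>I. f1 r > 0" and "\<forall>r\<in>I. f2 r > 0"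
    and "smooth_on A I" and "smooth_on B I" and "smooth_on C I"
  shows "(\<forall>x::point. x 1 \<in> I \<and> 0 < x 2 \<and> x 2 < pi \<longrightarrow>
            conformal_killing_at (sss_metric b f1 f2) (sss_metric_inv b f1 f2) (K_tensor A B C b f1 f2) x
          \<and> divergence_free_at (sss_metric b f1 f2) (sss_metric_inv b f1 f2) (K_tensor A B C b f1 f2) x)
     \<longleftrightarrow> (\<exists>\<kappa>1 \<kappa>2 \<kappa>3 :: real. \<forall>r\<in>I.
            A r = \<kappa>2 * (f2 r)\<^sup>2 - 2 * \<kappa>3 * (b r)\<^sup>2
          \<and> B r = \<kappa>1 + 2 * \<kappa>2 * (f2 r)\<^sup>2 + \<kappa>3 * (b r)\<^sup>2
          \<and> C r = - \<kappa>2 * (f2 r)\<^sup>2)"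
proof -
  interpret static_spherical b f1 f2 A B C I
    using assms by unfold_locales (auto intro: has_real_derivative_if_smooth_on)
  show ?thesis
    using killing_on_domain_iff_radial_killing_ode radial_killing_ode_iff_constants[OF assms(2)]
    by simp
qed

end
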